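(* Let $n\ge2$ and let $\rho=p_0|0^n\rangle\langle0^n|+\sum_{i,j=1}^nB_{ij}|e_i\rangle\langle e_j|$ be an $n$-qubit density operator, where $B$ is a real symmetric positive semidefinite $n\times n$ matrix and $p_0+\mathrm{Tr}B=1$. Then $\rho\in\mathcal S$ if and only if $B_{ii}\ge\sum_{j\ne i}|B_{ij}|$ for every $i=1,\dots,n$.
   Context: $|e_i\rangle$ denotes the computational-basis state with a $1$ on qubit $i$ and $0$ elsewhere. $\mathcal S$ is the $n$-qubit stabilizer polytope, the convex hull of the density matrices of pure stabilizer states $C|0^n\rangle$, $C$ an $n$-qubit Clifford unitary. *)

theory Defs
  imports Complex_Main
begin

text \<open>n-qubit operators are represented as complex matrices
  nat \<Rightarrow> nat \<Rightarrow> complex, of which only the entries with row and column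
  index below 2^n are meaningful.  Index r encodes the computational basis
  state whose qubit k (k < n, 0-indexed) is bit k of r.  Thus the state
  |0^n> has index 0 and |e_i> (a 1 on qubit i) has index 2^i.\<close>

type_synonym op = "nat \<Rightarrow> nat \<Rightarrow> complex"

definition mmul :: "nat \<Rightarrow> op \<Rightarrow> op \<Rightarrow> op" where
  "mmul n A B = (\<lambda>r c. \<Sum>k<2^n. A r k * B k c)"

definition adj :: "op \<Rightarrow> op" where
  "adj A = (\<lambda>r c. cnj (A c r))"

definition ident :: "op" where
  "ident = (\<lambda>r c. if r = c then 1 else 0)"

definition op_eq :: "nat \<Rightarrow> op \<Rightarrow> op \<Rightarrow> bool" where
  "op_eq n A B \<longleftrightarrow> (\<forall>r<2^n. \<forall>c<2^n. A r c = B r c)"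

definition unitary_op :: "nat \<Rightarrow> op \<Rightarrow> bool" where
  "unitary_op n U \<longleftrightarrow> op_eq n (mmul n U (adj U)) ident \<and> op_eq n (mmul n (adj U) U) ident"

text \<open>Pauli string X^x Z^z (x, z bit masks of length n):
  it maps |c> to (-1)^{|z AND c|} |c XOR x>.\<close>
definition pauli :: "nat \<Rightarrow> nat \<Rightarrow> op" where
  "pauli x z = (\<lambda>(r::nat) (c::nat). if r = xor c x
      then (-1) ^ card {k. bit z k \<and> bit c k} else 0)"

definition clifford :: "nat \<Rightarrow> op \<Rightarrow> bool" where
  "clifford n U \<longleftrightarrow> unitary_op n U \<and>
     (\<forall>x<2^n. \<forall>z<2^n. \<exists>ph x' z'. x' < 2^n \<and> z' < 2^n \<and>
        op_eq n (mmul n (mmul n U (pauli x z)) (adj U)) (\<lambda>r c. ph * pauli x' z' r c))"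

text \<open>Density matrix of the pure state C|0^n>.\<close>
definition stab_proj :: "op \<Rightarrow> op" where
  "stab_proj C = (\<lambda>r c. C r 0 * cnj (C c 0))"

definition stab_polytope :: "nat \<Rightarrow> op set" where
  "stab_polytope n = {\<rho>. \<exists>m (w :: nat \<Rightarrow> real) (C :: nat \<Rightarrow> op).
      (\<forall>j<m. 0 \<le> w j \<and> clifford n (C j)) \<and> (\<Sum>j<m. w j) = 1 \<and>
      op_eq n \<rho> (\<lambda>r c. \<Sum>j<m. complex_of_real (w j) * stab_proj (C j) r c)}"

definition density_op :: "nat \<Rightarrow> op \<Rightarrow> bool" where
  "density_op n \<rho> \<longleftrightarrow>
     (\<forall>r<2^n. \<forall>c<2^n. \<rho> c r = cnj (\<rho> r c)) \<and>
     (\<forall>v :: nat \<Rightarrow> complex. 0 \<le> Re (\<Sum>r<2^n. \<Sum>c<2^n. cnj (v r) * \<rho> r c * v c)) \<and>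
     (\<Sum>r<2^n. \<rho> r r) = 1"

definition rho_of :: "nat \<Rightarrow> real \<Rightarrow> (nat \<Rightarrow> nat \<Rightarrow> real) \<Rightarrow> op" where
  "rho_of n p0 B = (\<lambda>r c. (if r = 0 \<and> c = 0 then complex_of_real p0 else 0) +
      (\<Sum>i<n. \<Sum>j<n. if r = 2^i \<and> c = 2^j then complex_of_real (B i j) else 0))"

end

(*
  Sufficiency: with d_i = B_ii - sum_{l /= i} |B_il| >= 0 and s_il the sign of B_il,
    rho = p0 |0^n><0^n| + sum_i d_i |e_i><e_i|
          + sum_{i /= l} |B_il| |phi_il><phi_il|,   phi_il = (|e_i> + s_il |e_l>) / sqrt 2,
  an identity of matrices supported on span {|0^n>, |e_1>, ..., |e_n>}; each of these pure
  states is a stabilizer state: |e_i> = X_i |0^n> and phi_il = X_i Z_l^[s_il < 0] CNOT_il H_i |0^n>.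

  Necessity: if rho = sum_j w_j |psi_j><psi_j| with stabilizer states psi_j, then every psi_j
  with w_j > 0 lies in span {|0^n>, |e_1>, ..., |e_n>}, because rho vanishes on the other basis
  states.  For a stabilizer state the expectation of Z_k lies in {-1, 0, 1}, since C^dagger Z_k C
  is again a Pauli string up to phase; as <Z_k> = 1 - 2 |<e_k|psi>|^2 on such states, every
  weight |<e_k|psi>|^2 is 0, 1/2 or 1.  Hence psi has at most two nonzero amplitudes a_k on the
  e_k, and they satisfy sum_{l /= i} |a_i| |a_l| <= |a_i|^2.  Summing over j with the triangle
  inequality gives sum_{l /= i} |B_il| <= B_ii.
*)

theory Submission
  imports Defs
begin

lemma less_power2_iff_bits: "(x::nat) < 2^n \<longleftrightarrow> (\<forall>k. bit x k \<longrightarrow> k < n)"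
proof -
  have "x < 2^n \<longleftrightarrow> take_bit n x = x" by (simp add: take_bit_nat_eq_self_iff)
  also have "\<dots> \<longleftrightarrow> (\<forall>k. bit x k \<longrightarrow> k < n)"
    by (auto simp: bit_eq_iff bit_take_bit_iff)
  finally show ?thesis .
qed

lemma xor_less_power2: "x < 2^n \<Longrightarrow> y < 2^n \<Longrightarrow> (xor x y :: nat) < 2^n"
  by (auto simp: less_power2_iff_bits bit_xor_iff)

lemma bit_power2_nat_iff [simp]: "bit (2^m::nat) k \<longleftrightarrow> k = m"
  by (simp add: bit_exp_iff)

lemma finite_bits_nat: "finite {k. bit (c::nat) k}"
proof -
  have "{k. bit c k} \<subseteq> {..<c}" using less_power2_iff_bits[of c c] by auto
  then show ?thesis using finite_subset by blast
qed

lemma xor_eq_iff_nat: "(xor a b = (c::nat)) \<longleftrightarrow> a = xor c b"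
  by (auto simp: bit_eq_iff bit_xor_iff)

lemma xor_xor_cancel_right [simp]: "xor (xor a b) b = (a::nat)"
  by (auto simp: bit_eq_iff bit_xor_iff)

lemma xor_cancel_left_iff [simp]: "xor a b = xor a c \<longleftrightarrow> b = (c::nat)"
  by (metis xor_xor_cancel_right xor.commute)

lemma xor_self_left_iff [simp]: "xor a b = a \<longleftrightarrow> b = (0::nat)"
  by (metis xor.comm_neutral xor_cancel_left_iff)

lemma xor_self_left_iff' [simp]: "a = xor a b \<longleftrightarrow> b = (0::nat)"
  by (metis xor_self_left_iff)

lemma sum_eq_single:
  assumes "finite S" "a \<in> S" "\<And>k. k \<in> S \<Longrightarrow> k \<noteq> a \<Longrightarrow> f k = 0"
  shows "sum f S = f a"
  using assms by (simp add: sum.remove sum.neutral)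

lemma sum_eq_pair:
  assumes "finite S" "a \<in> S" "b \<in> S" "a \<noteq> b"
    and "\<And>k. k \<in> S \<Longrightarrow> k \<noteq> a \<Longrightarrow> k \<noteq> b \<Longrightarrow> f k = 0"
  shows "sum f S = f a + f b"
proof -
  have "sum f (S - {a}) = f b"
    using assms by (intro sum_eq_single) auto
  then show ?thesis using assms by (simp add: sum.remove)
qed

lemma mmul_assoc: "mmul n (mmul n A B) C = mmul n A (mmul n B C)"
  unfolding mmul_def
proof (intro ext)
  fix r c
  have "(\<Sum>k<2^n. (\<Sum>j<2^n. A r j * B j k) * C k c) = (\<Sum>k<2^n. \<Sum>j<2^n. A r j * B j k * C k c)"
    by (simp add: sum_distrib_right)
  also have "\<dots> = (\<Sum>j<2^n. \<Sum>k<2^n. A r j * B j k * C k c)"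
    by (rule sum.swap)
  also have "\<dots> = (\<Sum>j<2^n. A r j * (\<Sum>k<2^n. B j k * C k c))"
    by (simp add: sum_distrib_left mult.assoc)
  finally show "(\<Sum>k<2^n. (\<Sum>j<2^n. A r j * B j k) * C k c) = (\<Sum>j<2^n. A r j * (\<Sum>k<2^n. B j k * C k c))" .
qed

lemma adj_mmul: "adj (mmul n A B) = mmul n (adj B) (adj A)"
  unfolding mmul_def adj_def by (auto intro!: ext simp: mult.commute)

lemma mmul_scale_left: "mmul n (\<lambda>r c. a * A r c) B = (\<lambda>r c. a * mmul n A B r c)"
  unfolding mmul_def by (auto intro!: ext simp: sum_distrib_left mult.assoc)

lemma mmul_scale_right: "mmul n A (\<lambda>r c. a * B r c) = (\<lambda>r c. a * mmul n A B r c)"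
  unfolding mmul_def by (auto intro!: ext simp: sum_distrib_left mult.left_commute)

lemma op_eq_refl [simp]: "op_eq n A A"
  unfolding op_eq_def by simp

lemma op_eq_sym: "op_eq n A B \<Longrightarrow> op_eq n B A"
  unfolding op_eq_def by simp

lemma op_eq_trans [trans]: "op_eq n A B \<Longrightarrow> op_eq n B C \<Longrightarrow> op_eq n A C"
  unfolding op_eq_def by simp

lemma op_eq_scale: "op_eq n A B \<Longrightarrow> op_eq n (\<lambda>r c. a * A r c) (\<lambda>r c. a * B r c)"
  unfolding op_eq_def by simp

lemma op_eq_mmul: "op_eq n A A' \<Longrightarrow> op_eq n B B' \<Longrightarrow> op_eq n (mmul n A B) (mmul n A' B')"
  unfolding op_eq_def mmul_def by (auto intro!: sum.cong)

lemma mmul_ident_left: "op_eq n (mmul n ident A) A"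
  unfolding op_eq_def mmul_def
proof (intro allI impI)
  show "(\<Sum>k<2^n. ident r k * A k c) = A r c" if "r < 2^n" for r c
    using that by (subst sum_eq_single[where a=r]) (auto simp: ident_def)
qed

lemma mmul_ident_right: "op_eq n (mmul n A ident) A"
  unfolding op_eq_def mmul_def
proof (intro allI impI)
  show "(\<Sum>k<2^n. A r k * ident k c) = A r c" if "c < 2^n" for r c
    using that by (subst sum_eq_single[where a=c]) (auto simp: ident_def)
qed

lemma mmul_cancel_left:
  assumes "op_eq n (mmul n V W) ident"
  shows "op_eq n (mmul n V (mmul n W X)) X"
proof -
  have "op_eq n (mmul n (mmul n V W) X) (mmul n ident X)"
    by (intro op_eq_mmul op_eq_refl assms)
  then show ?thesis
    by (simp only: mmul_assoc) (rule op_eq_trans[OF _ mmul_ident_left])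
qed

lemma mmul_cancel_right:
  assumes "op_eq n (mmul n V W) ident"
  shows "op_eq n (mmul n X (mmul n V W)) X"
  by (rule op_eq_trans[OF op_eq_mmul[OF op_eq_refl assms] mmul_ident_right])

lemma mmul_cancel_middle:
  assumes "op_eq n (mmul n V W) ident"
  shows "op_eq n (mmul n U (mmul n V (mmul n W X))) (mmul n U X)"
  by (rule op_eq_mmul[OF op_eq_refl mmul_cancel_left[OF assms]])

section \<open>Pauli strings\<close>

definition zsign :: "nat \<Rightarrow> nat \<Rightarrow> complex" where
  "zsign z c = (-1) ^ card {k. bit z k \<and> bit c k}"

lemma pauli_apply: "pauli x z r c = (if r = xor c x then zsign z c else 0)"
  by (simp add: pauli_def zsign_def)

lemma neg_one_power_card_symdiff:
  assumes "finite A" "finite B"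
  shows "(-1::'a::comm_ring_1) ^ card ((A - B) \<union> (B - A)) = (-1) ^ card A * (-1) ^ card B"
proof -
  have A: "card A = card (A - B) + card (A \<inter> B)"
    using assms by (subst card_Un_disjoint[symmetric]) (auto simp: Un_Diff_Int)
  have B: "card B = card (B - A) + card (A \<inter> B)"
    using assms by (subst card_Un_disjoint[symmetric]) (auto simp: Int_commute[of A] Un_Diff_Int)
  have AB: "card ((A - B) \<union> (B - A)) = card (A - B) + card (B - A)"
    using assms by (intro card_Un_disjoint) auto
  have "(-1::'a) ^ card A * (-1) ^ card B
      = (-1) ^ (card (A - B) + card (B - A)) * ((-1) ^ card (A \<inter> B)) ^ 2"
    unfolding A B by (simp add: power_add power2_eq_square algebra_simps)
  also have "\<dots> = (-1) ^ (card (A - B) + card (B - A))"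
    by (simp flip: power_mult)
  finally show ?thesis using AB by simp
qed

lemma zsign_xor_right: "zsign z (xor c d) = zsign z c * zsign z d"
proof -
  let ?A = "{k. bit z k \<and> bit c k}" and ?B = "{k. bit z k \<and> bit d k}"
  have "finite ?A" "finite ?B"
    using finite_bits_nat[of c] finite_bits_nat[of d] by (auto intro: finite_subset)
  moreover have "{k. bit z k \<and> bit (xor c d) k} = (?A - ?B) \<union> (?B - ?A)"
    by (auto simp: bit_xor_iff)
  ultimately show ?thesis unfolding zsign_def by (simp add: neg_one_power_card_symdiff)
qed

lemma zsign_0 [simp]: "zsign 0 c = 1" "zsign z 0 = 1"
  unfolding zsign_def by simp_all

lemma zsign_commute: "zsign z c = zsign c z"
  unfolding zsign_def by (simp add: conj_commute)

lemma zsign_xor_left: "zsign (xor z y) c = zsign z c * zsign y c"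
  by (simp add: zsign_commute[of _ c] zsign_xor_right)

lemma zsign_power2_left: "zsign (2^k) c = (if bit c k then -1 else 1)"
proof -
  have "{j. bit (2^k::nat) j \<and> bit c j} = (if bit c k then {k} else {})" by auto
  then show ?thesis unfolding zsign_def by simp
qed

lemma zsign_power2_right: "zsign z (2^k) = (if bit z k then -1 else 1)"
  by (subst zsign_commute) (rule zsign_power2_left)

lemma zsign_square [simp]: "zsign z c * zsign z c = 1"
  unfolding zsign_def by (simp flip: power_mult_distrib)

lemma cnj_zsign [simp]: "cnj (zsign z c) = zsign z c"
  unfolding zsign_def by simp

definition scaled_pauli :: "complex \<Rightarrow> nat \<Rightarrow> nat \<Rightarrow> op" where
  "scaled_pauli p x z = (\<lambda>r c. p * pauli x z r c)"

lemma scaled_pauli_apply: "scaled_pauli p x z r c = p * (if r = xor c x then zsign z c else 0)"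
  by (simp add: scaled_pauli_def pauli_apply)

lemma pauli_eq_scaled_pauli: "pauli x z = scaled_pauli 1 x z"
  by (simp add: scaled_pauli_def)

lemma pauli_0_0: "pauli 0 0 = ident"
  by (auto intro!: ext simp: pauli_apply ident_def)

lemma mmul_pauli_apply:
  assumes "c < 2^n" "x2 < 2^n"
  shows "mmul n (pauli x1 z1) (pauli x2 z2) r c = zsign z1 x2 * pauli (xor x1 x2) (xor z1 z2) r c"
proof -
  have "mmul n (pauli x1 z1) (pauli x2 z2) r c = pauli x1 z1 r (xor c x2) * pauli x2 z2 (xor c x2) c"
    unfolding mmul_def
    by (rule sum_eq_single) (auto simp: pauli_apply xor_less_power2 assms)
  also have "\<dots> = zsign z1 x2 * pauli (xor x1 x2) (xor z1 z2) r c"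
  proof -
    have "xor (xor c x2) x1 = xor c (xor x1 x2)"
      by (auto simp: bit_eq_iff bit_xor_iff)
    then show ?thesis by (simp add: pauli_apply zsign_xor_right zsign_xor_left)
  qed
  finally show ?thesis .
qed

lemma mmul_scaled_pauli:
  assumes "x2 < 2^n"
  shows "op_eq n (mmul n (scaled_pauli p x1 z1) (scaled_pauli q x2 z2))
    (scaled_pauli (p * q * zsign z1 x2) (xor x1 x2) (xor z1 z2))"
  unfolding scaled_pauli_def mmul_scale_left mmul_scale_right op_eq_def
  using assms by (simp add: mmul_pauli_apply)

lemma adj_pauli: "adj (pauli x z) = scaled_pauli (zsign z x) x z"
  unfolding adj_def scaled_pauli_def
  by (auto intro!: ext simp: pauli_apply xor_eq_iff_nat zsign_xor_right)

lemma scaled_pauli_eq_zero: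
  assumes "x < 2^n" "op_eq n (scaled_pauli p x z) (\<lambda>r c. 0)"
  shows "p = 0"
  using assms unfolding op_eq_def by (force simp: scaled_pauli_apply)

lemma scaled_pauli_inj:
  assumes "x1 < 2^n" "z1 < 2^n" "x2 < 2^n" "z2 < 2^n" "\<alpha> \<noteq> 0"
    and eq: "op_eq n (scaled_pauli \<alpha> x1 z1) (scaled_pauli \<beta> x2 z2)"
  shows "x1 = x2 \<and> z1 = z2"
proof -
  have "scaled_pauli \<alpha> x1 z1 x1 0 = scaled_pauli \<beta> x2 z2 x1 0"
    using eq assms(1) by (simp add: op_eq_def)
  then have "\<alpha> = \<beta> * (if x1 = x2 then 1 else 0)"
    by (simp add: scaled_pauli_apply)
  then have x: "x1 = x2" and \<alpha>\<beta>: "\<alpha> = \<beta>"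
    using assms(5) by (auto split: if_splits)
  have "bit z1 k = bit z2 k" if "k < n" for k
  proof -
    have "xor (2^k) x1 < 2^n" using that assms(1) by (intro xor_less_power2) auto
    then have "scaled_pauli \<alpha> x1 z1 (xor (2^k) x1) (2^k) = scaled_pauli \<beta> x2 z2 (xor (2^k) x1) (2^k)"
      using eq that by (simp add: op_eq_def)
    then have "zsign z1 (2^k) = zsign z2 (2^k)"
      using x \<alpha>\<beta> assms(5) by (simp add: scaled_pauli_apply)
    then show ?thesis by (auto simp: zsign_power2_right split: if_splits)
  qed
  then have "z1 = z2"
    using assms(2,4) by (auto simp: bit_eq_iff less_power2_iff_bits)
  with x show ?thesis by simp
qed

section \<open>Clifford unitaries\<close>

lemma cliffordI:
  assumes "unitary_op n U"
    and "\<And>x z. x < 2^n \<Longrightarrow> z < 2^n \<Longrightarrow> \<exists>ph x' z'. x' < 2^n \<and> z' < 2^n \<and>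
          op_eq n (mmul n (mmul n U (pauli x z)) (adj U)) (scaled_pauli ph x' z')"
  shows "clifford n U"
  using assms unfolding clifford_def scaled_pauli_def by blast

lemma clifford_unitary: "clifford n U \<Longrightarrow> unitary_op n U"
  by (simp add: clifford_def)

lemma clifford_conjE:
  assumes "clifford n U" "x < 2^n" "z < 2^n"
  obtains ph x' z' where "x' < 2^n" "z' < 2^n"
    "op_eq n (mmul n (mmul n U (pauli x z)) (adj U)) (scaled_pauli ph x' z')"
proof -
  have "\<forall>x<2^n. \<forall>z<2^n. \<exists>ph x' z'. x' < 2^n \<and> z' < 2^n \<and>
        op_eq n (mmul n (mmul n U (pauli x z)) (adj U)) (scaled_pauli ph x' z')"
    using assms(1) unfolding clifford_def scaled_pauli_def by (rule conjunct2)
  then show ?thesis using assms(2,3) that by blast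
qed

lemma unitary_op_mmul:
  assumes U: "unitary_op n U" and V: "unitary_op n V"
  shows "unitary_op n (mmul n U V)"
proof -
  have "op_eq n (mmul n U (mmul n V (mmul n (adj V) (adj U)))) (mmul n U (adj U))"
    using V unfolding unitary_op_def by (intro mmul_cancel_middle) simp
  also have "op_eq n (mmul n U (adj U)) ident"
    using U unfolding unitary_op_def by simp
  finally have 1: "op_eq n (mmul n (mmul n U V) (adj (mmul n U V))) ident"
    by (simp only: adj_mmul mmul_assoc)
  have "op_eq n (mmul n (adj V) (mmul n (adj U) (mmul n U V))) (mmul n (adj V) V)"
    using U unfolding unitary_op_def by (intro mmul_cancel_middle) simp
  also have "op_eq n (mmul n (adj V) V) ident"
    using V unfolding unitary_op_def by simp
  finally have 2: "op_eq n (mmul n (adj (mmul n U V)) (mmul n U V)) ident"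
    by (simp only: adj_mmul mmul_assoc)
  show ?thesis using 1 2 unfolding unitary_op_def ..
qed

lemma adj_conj_cancel:
  assumes C: "unitary_op n C" and conj: "op_eq n (mmul n (mmul n C A) (adj C)) M"
  shows "op_eq n A (mmul n (mmul n (adj C) M) C)"
proof -
  have CC: "op_eq n (mmul n (adj C) C) ident"
    using C unfolding unitary_op_def by simp
  have "op_eq n (mmul n (adj C) (mmul n C (mmul n A (mmul n (adj C) C)))) A"
    by (rule op_eq_trans[OF mmul_cancel_left[OF CC] mmul_cancel_right[OF CC]])
  then have "op_eq n A (mmul n (mmul n (adj C) (mmul n (mmul n C A) (adj C))) C)"
    by (simp only: mmul_assoc op_eq_sym)
  also have "op_eq n \<dots> (mmul n (mmul n (adj C) M) C)"
    by (intro op_eq_mmul op_eq_refl conj)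
  finally show ?thesis .
qed

lemma clifford_pauli:
  assumes "x < 2^n"
  shows "clifford n (pauli x z)"
proof (rule cliffordI)
  show "unitary_op n (pauli x z)"
    using mmul_scaled_pauli[OF assms, of 1 x z "zsign z x" z]
      mmul_scaled_pauli[OF assms, of "zsign z x" x z 1 z]
    unfolding unitary_op_def adj_pauli
    by (simp add: pauli_0_0 flip: pauli_eq_scaled_pauli)
  fix a b :: nat assume ab: "a < 2^n" "b < 2^n"
  have "op_eq n (mmul n (mmul n (pauli x z) (pauli a b)) (adj (pauli x z)))
      (mmul n (scaled_pauli (zsign z a) (xor x a) (xor z b)) (scaled_pauli (zsign z x) x z))"
    unfolding adj_pauli
    by (intro op_eq_mmul op_eq_refl)
      (use mmul_scaled_pauli[OF ab(1), of 1 x z 1 b] in \<open>simp add: pauli_eq_scaled_pauli\<close>)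
  also have "op_eq n \<dots> (scaled_pauli (zsign z a * zsign z x * zsign (xor z b) x)
      (xor (xor x a) x) (xor (xor z b) z))"
    by (rule mmul_scaled_pauli[OF assms])
  finally have "op_eq n (mmul n (mmul n (pauli x z) (pauli a b)) (adj (pauli x z)))
      (scaled_pauli (zsign z a * zsign z x * zsign (xor z b) x) (xor (xor x a) x) (xor (xor z b) z))" .
  moreover have "xor (xor x a) x = a" "xor (xor z b) z = b"
    by (auto simp: bit_eq_iff bit_xor_iff)
  ultimately show "\<exists>ph x' z'. x' < 2^n \<and> z' < 2^n \<and>
      op_eq n (mmul n (mmul n (pauli x z) (pauli a b)) (adj (pauli x z))) (scaled_pauli ph x' z')"
    using ab by metis
qed

lemma clifford_ident: "clifford n ident"
  using clifford_pauli[of 0 n 0] by (simp add: pauli_0_0)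

lemma clifford_mmul:
  assumes U: "clifford n U" and V: "clifford n V"
  shows "clifford n (mmul n U V)"
proof (rule cliffordI)
  show "unitary_op n (mmul n U V)"
    using U V by (intro unitary_op_mmul clifford_unitary)
  fix x z :: nat assume xz: "x < 2^n" "z < 2^n"
  obtain ph1 x1 z1 where 1: "x1 < 2^n" "z1 < 2^n"
    "op_eq n (mmul n (mmul n V (pauli x z)) (adj V)) (scaled_pauli ph1 x1 z1)"
    using clifford_conjE[OF V xz] .
  obtain ph2 x2 z2 where 2: "x2 < 2^n" "z2 < 2^n"
    "op_eq n (mmul n (mmul n U (pauli x1 z1)) (adj U)) (scaled_pauli ph2 x2 z2)"
    using clifford_conjE[OF U 1(1,2)] .
  have "op_eq n (mmul n U (mmul n (mmul n V (pauli x z)) (mmul n (adj V) (adj U))))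
      (mmul n U (mmul n (scaled_pauli ph1 x1 z1) (adj U)))"
    using op_eq_mmul[OF op_eq_refl op_eq_mmul[OF 1(3) op_eq_refl]] by (simp only: mmul_assoc)
  also have "op_eq n \<dots> (scaled_pauli (ph1 * ph2) x2 z2)"
    using op_eq_scale[OF 2(3), of ph1]
    by (simp add: scaled_pauli_def mmul_scale_left mmul_scale_right mmul_assoc mult.assoc)
  finally have "op_eq n (mmul n (mmul n (mmul n U V) (pauli x z)) (adj (mmul n U V)))
      (scaled_pauli (ph1 * ph2) x2 z2)"
    by (simp only: adj_mmul mmul_assoc)
  then show "\<exists>ph x' z'. x' < 2^n \<and> z' < 2^n \<and>
      op_eq n (mmul n (mmul n (mmul n U V) (pauli x z)) (adj (mmul n U V))) (scaled_pauli ph x' z')"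
    using 2 by blast
qed

definition perm_op :: "(nat \<Rightarrow> nat) \<Rightarrow> op" where
  "perm_op \<pi> = (\<lambda>r c. if r = \<pi> c then 1 else 0)"

lemma adj_perm_op:
  assumes "\<And>c. \<pi> (\<pi> c) = c"
  shows "adj (perm_op \<pi>) = perm_op \<pi>"
  unfolding adj_def perm_op_def by (auto intro!: ext) (metis assms)+

lemma mmul_perm_op_left:
  assumes "\<And>c. \<pi> (\<pi> c) = c" "\<And>c. c < 2^n \<Longrightarrow> \<pi> c < 2^n" "r < 2^n"
  shows "mmul n (perm_op \<pi>) A r c = A (\<pi> r) c"
  unfolding mmul_def
proof (subst sum_eq_single[where a="\<pi> r"])
  show "perm_op \<pi> r k * A k c = 0" if "k \<noteq> \<pi> r" for k
    using that assms(1) by (auto simp: perm_op_def)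
qed (auto simp: perm_op_def assms)

lemma mmul_perm_op_right:
  assumes "c < 2^n" "\<And>c. c < 2^n \<Longrightarrow> \<pi> c < 2^n"
  shows "mmul n A (perm_op \<pi>) r c = A r (\<pi> c)"
  unfolding mmul_def
  by (subst sum_eq_single[where a="\<pi> c"]) (auto simp: perm_op_def assms)

lemma clifford_perm_op:
  assumes inv: "\<And>c. \<pi> (\<pi> c) = c" and bound: "\<And>c. c < 2^n \<Longrightarrow> \<pi> c < 2^n"
    and conj: "\<And>x z. x < 2^n \<Longrightarrow> z < 2^n \<Longrightarrow> \<exists>x' z'. x' < 2^n \<and> z' < 2^n \<and>
          (\<forall>r c. pauli x z (\<pi> r) (\<pi> c) = pauli x' z' r c)"
  shows "clifford n (perm_op \<pi>)"
proof (rule cliffordI)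
  have conj_apply: "mmul n (mmul n (perm_op \<pi>) P) (adj (perm_op \<pi>)) r c = P (\<pi> r) (\<pi> c)"
    if "r < 2^n" "c < 2^n" for P r c
    unfolding adj_perm_op[OF inv]
    by (simp add: mmul_perm_op_right[OF that(2) bound] mmul_perm_op_left[OF inv bound that(1)])
  have "mmul n (perm_op \<pi>) (perm_op \<pi>) r c = ident r c" if "r < 2^n" for r c
  proof -
    have "mmul n (perm_op \<pi>) (perm_op \<pi>) r c = perm_op \<pi> (\<pi> r) c"
      by (rule mmul_perm_op_left[OF inv bound that])
    also have "\<dots> = ident r c"
      unfolding perm_op_def ident_def by (metis inv)
    finally show ?thesis .
  qed
  then show "unitary_op n (perm_op \<pi>)"
    unfolding unitary_op_def adj_perm_op[OF inv] op_eq_def by simp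
  fix x z :: nat assume "x < 2^n" "z < 2^n"
  then obtain x' z' where "x' < 2^n" "z' < 2^n" "\<forall>r c. pauli x z (\<pi> r) (\<pi> c) = pauli x' z' r c"
    using conj by blast
  then show "\<exists>ph x' z'. x' < 2^n \<and> z' < 2^n \<and>
      op_eq n (mmul n (mmul n (perm_op \<pi>) (pauli x z)) (adj (perm_op \<pi>))) (scaled_pauli ph x' z')"
    by (intro exI[of _ 1] exI[of _ x'] exI[of _ z']) (simp add: op_eq_def conj_apply scaled_pauli_def)
qed

text \<open>Conjugation by the CNOT gate with control \<open>i\<close> and target \<open>l\<close> maps \<open>X\<^sup>x Z\<^sup>z\<close> to
  \<open>X\<^sup>x' Z\<^sup>z'\<close> with \<open>x' = cnot_perm i l x\<close> and \<open>z' = cnot_zmask i l z\<close>.\<close>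

definition cnot_perm :: "nat \<Rightarrow> nat \<Rightarrow> nat \<Rightarrow> nat" where
  "cnot_perm i l c = (if bit c i then xor c (2^l) else c)"

definition cnot_zmask :: "nat \<Rightarrow> nat \<Rightarrow> nat \<Rightarrow> nat" where
  "cnot_zmask i l z = (if bit z l then xor z (2^i) else z)"

lemma bit_cnot_perm: "bit (cnot_perm i l c) k \<longleftrightarrow> (bit c k \<noteq> (k = l \<and> bit c i))"
  unfolding cnot_perm_def by (auto simp: bit_xor_iff)

lemma cnot_perm_involution: "i \<noteq> l \<Longrightarrow> cnot_perm i l (cnot_perm i l c) = c"
  by (auto simp: bit_eq_iff bit_cnot_perm)

lemma cnot_perm_less: "l < n \<Longrightarrow> c < 2^n \<Longrightarrow> cnot_perm i l c < 2^n"
  by (auto simp: cnot_perm_def intro: xor_less_power2)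

lemma cnot_perm_xor: "cnot_perm i l (xor a b) = xor (cnot_perm i l a) (cnot_perm i l b)"
  by (auto simp: bit_eq_iff bit_cnot_perm bit_xor_iff)

lemma zsign_cnot_perm: "zsign z (cnot_perm i l c) = zsign (cnot_zmask i l z) c"
  unfolding cnot_perm_def cnot_zmask_def
  by (auto simp: zsign_xor_right zsign_xor_left zsign_power2_left zsign_power2_right)

lemma clifford_cnot:
  assumes "i < n" "l < n" "i \<noteq> l"
  shows "clifford n (perm_op (cnot_perm i l))"
proof (rule clifford_perm_op)
  show "cnot_perm i l (cnot_perm i l c) = c" for c
    using assms by (simp add: cnot_perm_involution)
  show "c < 2^n \<Longrightarrow> cnot_perm i l c < 2^n" for c
    using assms by (simp add: cnot_perm_less)
  fix x z :: nat assume xz: "x < 2^n" "z < 2^n"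
  have "pauli x z (cnot_perm i l r) (cnot_perm i l c) = pauli (cnot_perm i l x) (cnot_zmask i l z) r c"
    for r c
  proof -
    have "cnot_perm i l r = xor (cnot_perm i l c) x \<longleftrightarrow> r = xor c (cnot_perm i l x)"
      by (metis assms(3) cnot_perm_involution cnot_perm_xor)
    then show ?thesis by (simp add: pauli_apply zsign_cnot_perm)
  qed
  moreover have "cnot_perm i l x < 2^n" "cnot_zmask i l z < 2^n"
    using assms xz by (auto simp: cnot_perm_less cnot_zmask_def intro: xor_less_power2)
  ultimately show "\<exists>x' z'. x' < 2^n \<and> z' < 2^n \<and>
      (\<forall>r c. pauli x z (cnot_perm i l r) (cnot_perm i l c) = pauli x' z' r c)"
    by blast
qed

definition inv_sqrt2 :: complex where
  "inv_sqrt2 = complex_of_real (1 / sqrt 2)"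

lemma inv_sqrt2_square: "inv_sqrt2 * inv_sqrt2 = 1/2"
  unfolding inv_sqrt2_def by (simp flip: of_real_mult)

lemma cnj_inv_sqrt2 [simp]: "cnj inv_sqrt2 = inv_sqrt2"
  unfolding inv_sqrt2_def by simp

definition hadamard :: "nat \<Rightarrow> op" where
  "hadamard i = (\<lambda>r c. if r = c then (if bit c i then - inv_sqrt2 else inv_sqrt2)
      else if r = xor c (2^i) then inv_sqrt2 else 0)"

lemma adj_hadamard: "adj (hadamard i) = hadamard i"
  unfolding adj_def hadamard_def by (auto intro!: ext simp: xor_eq_iff_nat)

text \<open>\<open>H X H = Z\<close>, \<open>H Z H = X\<close> and \<open>H XZ H = - XZ\<close> on qubit \<open>i\<close>.\<close>

lemma hadamard_conj_pauli_apply: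
  assumes "i < n" "r < 2^n" "c < 2^n" "x < 2^n"
  shows "mmul n (mmul n (hadamard i) (pauli x z)) (hadamard i) r c =
    (if bit x i \<and> bit z i then -1 else 1) *
      pauli (if bit x i = bit z i then x else xor x (2^i))
        (if bit x i = bit z i then z else xor z (2^i)) r c"
proof -
  have HP: "mmul n (hadamard i) (pauli x z) r k = hadamard i r (xor k x) * zsign z k"
    if "k < 2^n" for k
    unfolding mmul_def
    by (subst sum_eq_single[where a="xor k x"]) (auto simp: pauli_apply xor_less_power2 that assms)
  have ci: "xor c (2^i) < 2^n" using assms by (intro xor_less_power2) auto
  have "mmul n (mmul n (hadamard i) (pauli x z)) (hadamard i) r c =
      mmul n (hadamard i) (pauli x z) r c * hadamard i c c
      + mmul n (hadamard i) (pauli x z) r (xor c (2^i)) * hadamard i (xor c (2^i)) c"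
    unfolding mmul_def[of n "mmul n (hadamard i) (pauli x z)" "hadamard i"]
    by (rule sum_eq_pair) (auto simp: ci assms hadamard_def)
  also have "\<dots> = hadamard i r (xor c x) * zsign z c * hadamard i c c
      + hadamard i r (xor (xor c (2^i)) x) * zsign z (xor c (2^i)) * hadamard i (xor c (2^i)) c"
    by (simp add: HP ci assms)
  also have "\<dots> = (if bit x i \<and> bit z i then -1 else 1) *
      pauli (if bit x i = bit z i then x else xor x (2^i))
        (if bit x i = bit z i then z else xor z (2^i)) r c"
    unfolding hadamard_def pauli_apply
    apply (simp add: xor.assoc zsign_xor_right zsign_xor_left zsign_power2_left zsign_power2_right
        bit_xor_iff)
    apply (cases "bit c i"; cases "bit x i"; cases "bit z i")
            apply (auto simp: algebra_simps inv_sqrt2_square xor.commute[of "2^i"])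
    done
  finally show ?thesis .
qed

lemma clifford_hadamard:
  assumes "i < n"
  shows "clifford n (hadamard i)"
proof (rule cliffordI)
  have "op_eq n (mmul n (mmul n (hadamard i) (pauli 0 0)) (hadamard i)) (mmul n (hadamard i) (hadamard i))"
    unfolding pauli_0_0 by (rule op_eq_mmul[OF mmul_ident_right op_eq_refl])
  moreover have "op_eq n (mmul n (mmul n (hadamard i) (pauli 0 0)) (hadamard i)) ident"
    using hadamard_conj_pauli_apply[OF assms, of _ _ 0 0] by (simp add: op_eq_def pauli_0_0)
  ultimately show "unitary_op n (hadamard i)"
    unfolding unitary_op_def adj_hadamard by (meson op_eq_sym op_eq_trans)
  fix x z :: nat assume xz: "x < 2^n" "z < 2^n"
  have "xor x (2^i) < 2^n" "xor z (2^i) < 2^n"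
    using xz assms by (auto intro!: xor_less_power2)
  then show "\<exists>ph x' z'. x' < 2^n \<and> z' < 2^n \<and>
      op_eq n (mmul n (mmul n (hadamard i) (pauli x z)) (adj (hadamard i))) (scaled_pauli ph x' z')"
    unfolding op_eq_def adj_hadamard scaled_pauli_def
    using hadamard_conj_pauli_apply[OF assms _ _ xz(1)] xz
    by (intro exI[of _ "if bit x i \<and> bit z i then -1 else 1"]
        exI[of _ "if bit x i = bit z i then x else xor x (2^i)"]
        exI[of _ "if bit x i = bit z i then z else xor z (2^i)"]) auto
qed

text \<open>\<open>pair_prep n i l s = X\<^sub>i Z\<^sub>l\<^sup>[\<not>s] CNOT\<^sub>i\<^sub>l H\<^sub>i\<close> prepares \<open>(|e\<^sub>i\<rangle> \<plusminus> |e\<^sub>l\<rangle>)/\<surd>2\<close>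
  from \<open>|0\<^sup>n\<rangle>\<close>, with sign \<open>+\<close> iff \<open>s\<close>.\<close>

definition pair_prep :: "nat \<Rightarrow> nat \<Rightarrow> nat \<Rightarrow> bool \<Rightarrow> op" where
  "pair_prep n i l s =
     mmul n (mmul n (pauli (2^i) (if s then 0 else 2^l)) (perm_op (cnot_perm i l))) (hadamard i)"

lemma clifford_pair_prep:
  assumes "i < n" "l < n" "i \<noteq> l"
  shows "clifford n (pair_prep n i l s)"
  unfolding pair_prep_def
  using assms by (intro clifford_mmul clifford_pauli clifford_cnot clifford_hadamard) auto

lemma pair_prep_col0:
  assumes "i < n" "l < n" "i \<noteq> l" "r < 2^n"
  shows "pair_prep n i l s r 0 =
    inv_sqrt2 * (of_bool (r = 2^i) + (if s then 1 else -1) * of_bool (r = 2^l))"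
proof -
  let ?P = "pauli (2^i) (if s then 0 else 2^l)"
  have pi: "(2::nat)^i < 2^n" using assms by simp
  have CX: "mmul n ?P (perm_op (cnot_perm i l)) r k = ?P r (cnot_perm i l k)" if "k < 2^n" for k
    using assms by (intro mmul_perm_op_right that cnot_perm_less)
  have "pair_prep n i l s r 0 = mmul n ?P (perm_op (cnot_perm i l)) r 0 * inv_sqrt2
       + mmul n ?P (perm_op (cnot_perm i l)) r (2^i) * inv_sqrt2"
    unfolding pair_prep_def mmul_def[of n "mmul n ?P (perm_op (cnot_perm i l))" "hadamard i"]
    by (subst sum_eq_pair[where a=0 and b="2^i"]) (auto simp: pi hadamard_def)
  also have "\<dots> = ?P r 0 * inv_sqrt2 + ?P r (xor (2^i) (2^l)) * inv_sqrt2"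
    using pi by (simp add: CX cnot_perm_def)
  also have "\<dots> = inv_sqrt2 * (of_bool (r = 2^i) + (if s then 1 else -1) * of_bool (r = 2^l))"
  proof -
    have "xor (xor (2^i) (2^l)) (2^i) = (2::nat)^l"
      by (auto simp: bit_eq_iff bit_xor_iff)
    moreover have "zsign (if s then 0 else 2^l) (xor (2^i) (2^l)) = (if s then 1 else -1)"
      using assms(3) by (auto simp: zsign_power2_left bit_xor_iff)
    ultimately show ?thesis using assms(3) by (simp add: pauli_apply algebra_simps)
  qed
  finally show ?thesis .
qed

section \<open>Diagonally dominant states are stabilizer mixtures\<close>

definition stab_cone :: "nat \<Rightarrow> real \<Rightarrow> op \<Rightarrow> bool" where
  "stab_cone n t \<rho> \<longleftrightarrow> (\<exists>m (w::nat \<Rightarrow> real) (C::nat \<Rightarrow> op).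
     (\<forall>j<m. 0 \<le> w j \<and> clifford n (C j)) \<and> (\<Sum>j<m. w j) = t \<and>
     op_eq n \<rho> (\<lambda>r c. \<Sum>j<m. complex_of_real (w j) * stab_proj (C j) r c))"

lemma stab_polytope_iff_stab_cone: "\<rho> \<in> stab_polytope n \<longleftrightarrow> stab_cone n 1 \<rho>"
  unfolding stab_polytope_def stab_cone_def by simp

lemma stab_cone_zero: "stab_cone n 0 (\<lambda>r c. 0)"
  unfolding stab_cone_def by (rule exI[of _ 0]) (simp add: op_eq_def)

lemma stab_cone_single:
  assumes "clifford n C" "0 \<le> a"
  shows "stab_cone n a (\<lambda>r c. complex_of_real a * stab_proj C r c)"
  unfolding stab_cone_def using assms
  by (intro exI[of _ 1] exI[of _ "\<lambda>_. a"] exI[of _ "\<lambda>_. C"]) (simp add: op_eq_def)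

lemma sum_lessThan_add_nat:
  "(\<Sum>j<m1 + (m2::nat). f j) = (\<Sum>j<m1. f j) + (\<Sum>j<m2. (f (m1 + j) :: 'a::comm_monoid_add))"
  by (induct m2) (simp_all add: add.assoc)

lemma stab_cone_add:
  assumes "stab_cone n t1 \<rho>1" "stab_cone n t2 \<rho>2"
  shows "stab_cone n (t1 + t2) (\<lambda>r c. \<rho>1 r c + \<rho>2 r c)"
proof -
  obtain m1 w1 C1 where 1: "\<forall>j<(m1::nat). 0 \<le> w1 j \<and> clifford n (C1 j)" "(\<Sum>j<m1. w1 j) = t1"
    "op_eq n \<rho>1 (\<lambda>r c. \<Sum>j<m1. complex_of_real (w1 j) * stab_proj (C1 j) r c)"
    using assms(1) unfolding stab_cone_def by blast
  obtain m2 w2 C2 where 2: "\<forall>j<(m2::nat). 0 \<le> w2 j \<and> clifford n (C2 j)" "(\<Sum>j<m2. w2 j) = t2"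
    "op_eq n \<rho>2 (\<lambda>r c. \<Sum>j<m2. complex_of_real (w2 j) * stab_proj (C2 j) r c)"
    using assms(2) unfolding stab_cone_def by blast
  define w where "w j = (if j < m1 then w1 j else w2 (j - m1))" for j
  define C where "C j = (if j < m1 then C1 j else C2 (j - m1))" for j
  have "\<forall>j<m1 + m2. 0 \<le> w j \<and> clifford n (C j)"
    using 1(1) 2(1) unfolding w_def C_def by auto
  moreover have "(\<Sum>j<m1 + m2. w j) = t1 + t2"
    unfolding sum_lessThan_add_nat using 1(2) 2(2) by (simp add: w_def)
  moreover have "op_eq n (\<lambda>r c. \<rho>1 r c + \<rho>2 r c)
      (\<lambda>r c. \<Sum>j<m1 + m2. complex_of_real (w j) * stab_proj (C j) r c)"
    unfolding sum_lessThan_add_nat using 1(3) 2(3) by (simp add: w_def C_def op_eq_def)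
  ultimately show ?thesis unfolding stab_cone_def by blast
qed

lemma stab_cone_sum:
  assumes "finite S" "\<And>k. k \<in> S \<Longrightarrow> stab_cone n (t k) (\<rho> k)"
  shows "stab_cone n (\<Sum>k\<in>S. t k) (\<lambda>r c. \<Sum>k\<in>S. \<rho> k r c)"
  using assms
proof (induction S rule: finite_induct)
  case empty
  then show ?case using stab_cone_zero by simp
next
  case (insert x F)
  then show ?case
    using stab_cone_add[of n "t x" "\<rho> x" "sum t F" "\<lambda>r c. \<Sum>k\<in>F. \<rho> k r c"] by simp
qed

lemma stab_cone_op_eq:
  assumes "stab_cone n t \<rho>" "op_eq n \<rho>' \<rho>"
  shows "stab_cone n t \<rho>'"
  using assms unfolding stab_cone_def by (blast intro: op_eq_trans)

definition ket_e :: "nat \<Rightarrow> nat \<Rightarrow> real" where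
  "ket_e i r = (if r = 2^i then 1 else 0)"

lemma stab_proj_ident: "stab_proj ident r c = (if r = 0 \<and> c = 0 then 1 else 0)"
  unfolding stab_proj_def ident_def by simp

lemma stab_proj_pauli_X: "stab_proj (pauli (2^i) 0) r c = complex_of_real (ket_e i r * ket_e i c)"
  unfolding stab_proj_def ket_e_def by (simp add: pauli_apply)

lemma stab_proj_pair_prep:
  fixes s :: bool
  assumes "i < n" "l < n" "i \<noteq> l" "r < 2^n" "c < 2^n"
  defines "\<sigma> \<equiv> if s then 1 else -1 :: real"
  shows "stab_proj (pair_prep n i l s) r c = complex_of_real
    ((ket_e i r + \<sigma> * ket_e l r) * (ket_e i c + \<sigma> * ket_e l c) / 2)"
proof -
  have col: "pair_prep n i l s x 0 = inv_sqrt2 * complex_of_real (ket_e i x + \<sigma> * ket_e l x)"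
    if "x < 2^n" for x
    unfolding pair_prep_col0[OF assms(1-3) that] \<sigma>_def ket_e_def by simp
  have prod: "inv_sqrt2 * complex_of_real X * cnj (inv_sqrt2 * complex_of_real Y)
      = complex_of_real (X * Y / 2)" for X Y
  proof -
    have "inv_sqrt2 * complex_of_real X * cnj (inv_sqrt2 * complex_of_real Y)
        = (inv_sqrt2 * inv_sqrt2) * complex_of_real (X * Y)"
      by (simp add: algebra_simps)
    then show ?thesis by (simp add: inv_sqrt2_square)
  qed
  show ?thesis
    unfolding stab_proj_def col[OF assms(4)] col[OF assms(5)] prod by (simp add: mult.assoc)
qed

lemma sum_offdiag_swap:
  "(\<Sum>i<(n::nat). \<Sum>l\<in>{..<n} - {i}. f i l) = (\<Sum>i<n. \<Sum>l\<in>{..<n} - {i}. f l i)"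
proof -
  have "(\<Sum>i<n. \<Sum>l\<in>{..<n} - {i}. f i l) = (\<Sum>i<n. \<Sum>l\<in>{l \<in> {..<n}. i \<noteq> l}. f i l)"
    by (intro sum.cong) auto
  also have "\<dots> = (\<Sum>l<n. \<Sum>i\<in>{i \<in> {..<n}. i \<noteq> l}. f i l)"
    by (rule sum.swap_restrict) auto
  also have "\<dots> = (\<Sum>l<n. \<Sum>i\<in>{..<n} - {l}. f i l)"
    by (intro sum.cong) auto
  finally show ?thesis .
qed

lemma diag_dominant_pair_decomposition:
  fixes B :: "nat \<Rightarrow> nat \<Rightarrow> real" and u v :: "nat \<Rightarrow> real"
  assumes sym: "\<forall>i<n. \<forall>j<n. B i j = B j i"
  defines "\<sigma> i l \<equiv> if 0 \<le> B i l then 1 else -1 :: real"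
  shows "(\<Sum>i<n. \<Sum>l<n. B i l * u i * v l) =
    (\<Sum>i<n. (B i i - (\<Sum>l\<in>{..<n} - {i}. \<bar>B i l\<bar>)) * u i * v i) +
    (\<Sum>i<n. \<Sum>l\<in>{..<n} - {i}. \<bar>B i l\<bar> * ((u i + \<sigma> i l * u l) * (v i + \<sigma> i l * v l) / 2))"
proof -
  let ?D = "\<lambda>i l. \<bar>B i l\<bar> * u i * v i / 2" and ?E = "\<lambda>i l. B i l * u i * v l / 2"
  have pair: "\<bar>B i l\<bar> * ((u i + \<sigma> i l * u l) * (v i + \<sigma> i l * v l) / 2)
      = ?D i l + ?D l i + ?E i l + ?E l i" if "i < n" "l < n" for i l
    using sym that by (cases "0 \<le> B i l") (auto simp: \<sigma>_def field_simps)
  have "(\<Sum>i<n. \<Sum>l\<in>{..<n} - {i}. \<bar>B i l\<bar> * ((u i + \<sigma> i l * u l) * (v i + \<sigma> i l * v l) / 2))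
      = (\<Sum>i<n. \<Sum>l\<in>{..<n} - {i}. ?D i l + ?D l i + ?E i l + ?E l i)"
    by (intro sum.cong refl pair) auto
  also have "\<dots> = (\<Sum>i<n. \<Sum>l\<in>{..<n} - {i}. ?D i l) + (\<Sum>i<n. \<Sum>l\<in>{..<n} - {i}. ?D l i)
        + (\<Sum>i<n. \<Sum>l\<in>{..<n} - {i}. ?E i l) + (\<Sum>i<n. \<Sum>l\<in>{..<n} - {i}. ?E l i)"
    by (simp only: sum.distrib)
  also have "\<dots> = 2 * (\<Sum>i<n. \<Sum>l\<in>{..<n} - {i}. ?D i l) + 2 * (\<Sum>i<n. \<Sum>l\<in>{..<n} - {i}. ?E i l)"
    using sum_offdiag_swap[of ?D n] sum_offdiag_swap[of ?E n] by simp
  also have "\<dots> = (\<Sum>i<n. (\<Sum>l\<in>{..<n} - {i}. \<bar>B i l\<bar>) * u i * v i)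
      + (\<Sum>i<n. \<Sum>l\<in>{..<n} - {i}. B i l * u i * v l)"
    by (simp add: sum_distrib_left sum_distrib_right)
  finally have offdiag: "(\<Sum>i<n. \<Sum>l\<in>{..<n} - {i}. \<bar>B i l\<bar> * ((u i + \<sigma> i l * u l) * (v i + \<sigma> i l * v l) / 2))
      = (\<Sum>i<n. (\<Sum>l\<in>{..<n} - {i}. \<bar>B i l\<bar>) * u i * v i)
      + (\<Sum>i<n. \<Sum>l\<in>{..<n} - {i}. B i l * u i * v l)" .
  have row: "(\<Sum>l<n. B i l * u i * v l) = B i i * u i * v i + (\<Sum>l\<in>{..<n} - {i}. B i l * u i * v l)"
    if "i < n" for i
    using that by (simp add: sum.remove)
  show ?thesis
    unfolding offdiag by (simp add: row sum.distrib left_diff_distrib sum_subtractf)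
qed

lemma rho_of_apply:
  "rho_of n p0 B r c = complex_of_real ((if r = 0 \<and> c = 0 then p0 else 0) +
     (\<Sum>i<n. \<Sum>l<n. B i l * ket_e i r * ket_e l c))"
proof -
  have "(if r = 2^i \<and> c = 2^l then complex_of_real (B i l) else 0)
      = complex_of_real (B i l * ket_e i r * ket_e l c)" for i l
    by (simp add: ket_e_def)
  then show ?thesis unfolding rho_of_def by (simp add: of_real_sum)
qed

lemma rho_of_in_stab_cone:
  fixes B :: "nat \<Rightarrow> nat \<Rightarrow> real"
  assumes sym: "\<forall>i<n. \<forall>j<n. B i j = B j i" and "0 \<le> p0" and trace: "p0 + (\<Sum>i<n. B i i) = 1"
    and dominant: "\<forall>i<n. B i i \<ge> (\<Sum>l\<in>{..<n} - {i}. \<bar>B i l\<bar>)"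
  shows "stab_cone n 1 (rho_of n p0 B)"
proof -
  define d where "d i = B i i - (\<Sum>l\<in>{..<n} - {i}. \<bar>B i l\<bar>)" for i
  define \<phi> where "\<phi> i l = stab_proj (pair_prep n i l (0 \<le> B i l))" for i l
  let ?e = "\<lambda>i. stab_proj (pauli (2^i) 0)"
  let ?R = "\<lambda>r c. complex_of_real p0 * stab_proj ident r c +
     ((\<Sum>i<n. complex_of_real (d i) * ?e i r c) +
      (\<Sum>i<n. \<Sum>l\<in>{..<n} - {i}. complex_of_real \<bar>B i l\<bar> * \<phi> i l r c))"
  have cone: "stab_cone n (p0 + ((\<Sum>i<n. d i) + (\<Sum>i<n. \<Sum>l\<in>{..<n} - {i}. \<bar>B i l\<bar>))) ?R"
    unfolding \<phi>_def using \<open>0 \<le> p0\<close> dominant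
    by (intro stab_cone_add stab_cone_sum stab_cone_single clifford_ident clifford_pauli
        clifford_pair_prep) (auto simp: d_def)
  have total: "p0 + ((\<Sum>i<n. d i) + (\<Sum>i<n. \<Sum>l\<in>{..<n} - {i}. \<bar>B i l\<bar>)) = 1"
    using trace by (simp add: d_def sum_subtractf)
  have eq: "op_eq n (rho_of n p0 B) ?R"
    unfolding op_eq_def
  proof (intro allI impI)
    fix r c :: nat assume rc: "r < 2^n" "c < 2^n"
    have pairs: "(\<Sum>i<n. \<Sum>l\<in>{..<n} - {i}. complex_of_real \<bar>B i l\<bar> * \<phi> i l r c)
      = (\<Sum>i<n. \<Sum>l\<in>{..<n} - {i}. complex_of_real (\<bar>B i l\<bar> *
          ((ket_e i r + (if 0 \<le> B i l then 1 else -1) * ket_e l r)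
          * (ket_e i c + (if 0 \<le> B i l then 1 else -1) * ket_e l c) / 2)))"
      using rc by (intro sum.cong refl) (simp add: \<phi>_def stab_proj_pair_prep)
    show "rho_of n p0 B r c = ?R r c"
      unfolding rho_of_apply diag_dominant_pair_decomposition[OF sym] pairs
      by (simp add: stab_proj_ident stab_proj_pauli_X of_real_sum mult.assoc flip: d_def)
  qed
  show ?thesis
    using stab_cone_op_eq[OF cone[unfolded total] eq] .
qed

section \<open>Pauli-Z expectations of stabilizer states\<close>

lemma clifford_conj_pauli_phase_nonzero:
  assumes C: "clifford n C" and x: "x < 2^n"
    and conj: "op_eq n (mmul n (mmul n C (pauli x z)) (adj C)) (scaled_pauli ph x' z')"
  shows "ph \<noteq> 0"
proof
  assume "ph = 0"
  then have "op_eq n (pauli x z) (mmul n (mmul n (adj C) (\<lambda>r c. 0)) C)"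
    using adj_conj_cancel[OF clifford_unitary[OF C] conj] by (simp add: scaled_pauli_def)
  then have "op_eq n (scaled_pauli 1 x z) (\<lambda>r c. 0)"
    by (simp add: pauli_eq_scaled_pauli mmul_def)
  then show False using scaled_pauli_eq_zero[OF x] by fastforce
qed

lemma clifford_conj_pauli_inj:
  assumes C: "clifford n C" and lt: "x1 < 2^n" "z1 < 2^n" "x2 < 2^n" "z2 < 2^n"
    and conj1: "op_eq n (mmul n (mmul n C (pauli x1 z1)) (adj C)) (scaled_pauli ph1 x z)"
    and conj2: "op_eq n (mmul n (mmul n C (pauli x2 z2)) (adj C)) (scaled_pauli ph2 x z)"
  shows "x1 = x2 \<and> z1 = z2"
proof -
  let ?M = "mmul n (mmul n (adj C) (pauli x z)) C"
  have "op_eq n (pauli x1 z1) (\<lambda>r c. ph1 * ?M r c)" "op_eq n (pauli x2 z2) (\<lambda>r c. ph2 * ?M r c)"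
    using adj_conj_cancel[OF clifford_unitary[OF C] conj1] adj_conj_cancel[OF clifford_unitary[OF C] conj2]
    by (simp_all add: scaled_pauli_def mmul_scale_left mmul_scale_right)
  then have "op_eq n (scaled_pauli ph2 x1 z1) (scaled_pauli ph1 x2 z2)"
    unfolding op_eq_def scaled_pauli_def by (simp add: mult.left_commute)
  then show ?thesis
    using lt clifford_conj_pauli_phase_nonzero[OF C lt(3) conj2] by (intro scaled_pauli_inj)
qed

text \<open>Conjugation by a Clifford unitary maps the finitely many Pauli labels injectively into
  themselves, hence onto; so every Pauli string is the image of one, and \<open>C\<^sup>\<dagger> P C\<close> is again a
  Pauli string up to phase.\<close>

lemma clifford_adj_conj_pauli:
  assumes C: "clifford n C" and xz: "x < 2^n" "z < 2^n"
  shows "\<exists>ph x' z'. x' < 2^n \<and> z' < 2^n \<and>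
    op_eq n (mmul n (mmul n (adj C) (pauli x z)) C) (scaled_pauli ph x' z')"
proof -
  define S where "S = {..<(2::nat)^n} \<times> {..<(2::nat)^n}"
  define maps_to where "maps_to a q \<longleftrightarrow> q \<in> S \<and> (\<exists>ph.
      op_eq n (mmul n (mmul n C (pauli (fst a) (snd a))) (adj C)) (scaled_pauli ph (fst q) (snd q)))"
    for a q
  define label where "label a = (SOME q. maps_to a q)" for a
  have label: "maps_to a (label a)" if "a \<in> S" for a
  proof -
    have "fst a < 2^n" "snd a < 2^n" using that by (auto simp: S_def)
    then obtain ph x' z' where "x' < 2^n" "z' < 2^n"
      "op_eq n (mmul n (mmul n C (pauli (fst a) (snd a))) (adj C)) (scaled_pauli ph x' z')"
      by (rule clifford_conjE[OF C])
    then have "maps_to a (x', z')" by (auto simp: maps_to_def S_def)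
    then show ?thesis unfolding label_def by (rule someI)
  qed
  have "inj_on label S"
  proof (rule inj_onI)
    fix a b assume "a \<in> S" "b \<in> S" "label a = label b"
    then show "a = b"
      using label[of a] label[of b] clifford_conj_pauli_inj[OF C, of "fst a" "snd a" "fst b" "snd b"]
      by (auto simp: maps_to_def S_def prod_eq_iff)
  qed
  moreover have "label ` S \<subseteq> S"
    using label by (auto simp: maps_to_def)
  ultimately have "label ` S = S"
    by (intro endo_inj_surj) (auto simp: S_def)
  with xz obtain a where a: "a \<in> S" "label a = (x, z)"
    by (metis (no_types, lifting) S_def imageE lessThan_iff mem_Sigma_iff)
  then obtain ph where conj:
    "op_eq n (mmul n (mmul n C (pauli (fst a) (snd a))) (adj C)) (scaled_pauli ph x z)"
    using label[OF a(1)] by (auto simp: maps_to_def)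
  have a_lt: "fst a < 2^n" "snd a < 2^n" using a(1) by (auto simp: S_def)
  have "op_eq n (pauli (fst a) (snd a)) (\<lambda>r c. ph * mmul n (mmul n (adj C) (pauli x z)) C r c)"
    using adj_conj_cancel[OF clifford_unitary[OF C] conj]
    by (simp add: scaled_pauli_def mmul_scale_left mmul_scale_right)
  then have "op_eq n (mmul n (mmul n (adj C) (pauli x z)) C) (scaled_pauli (1/ph) (fst a) (snd a))"
    using clifford_conj_pauli_phase_nonzero[OF C a_lt(1) conj]
    unfolding op_eq_def scaled_pauli_def by simp
  with a_lt show ?thesis by blast
qed

lemma cnj_mult_self: "cnj y * y = complex_of_real ((cmod y)^2)"
  using complex_norm_square[of y] by (simp add: mult.commute)

lemma cnj_mult_real_mult_self: "cnj y * complex_of_real s * y = complex_of_real ((cmod y)^2 * s)"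
proof -
  have "cnj y * complex_of_real s * y = (cnj y * y) * complex_of_real s"
    by (simp add: algebra_simps)
  also have "\<dots> = complex_of_real ((cmod y)^2) * complex_of_real s"
    by (simp only: cnj_mult_self)
  finally show ?thesis by simp
qed

lemma unitary_col0_norm:
  assumes "unitary_op n C"
  shows "(\<Sum>b<2^n. (cmod (C b 0))^2) = 1"
proof -
  have "mmul n (adj C) C 0 0 = ident 0 0"
    using assms by (simp add: unitary_op_def op_eq_def)
  then have "(\<Sum>b<2^n. cnj (C b 0) * C b 0) = 1"
    by (simp add: mmul_def adj_def ident_def)
  then have "complex_of_real (\<Sum>b<2^n. (cmod (C b 0))^2) = 1"
    by (simp add: cnj_mult_self of_real_sum)
  then show ?thesis by (metis of_real_1 of_real_eq_iff)
qed

lemma zsign_power2_left_real: "zsign (2^k) b = complex_of_real (if bit b k then -1 else 1)"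
  by (simp add: zsign_power2_left)

lemma Z_expectation_apply:
  "mmul n (mmul n (adj C) (pauli 0 (2^k))) C 0 0 =
    complex_of_real (\<Sum>b<2^n. (cmod (C b 0))^2 * (if bit b k then -1 else 1))"
proof -
  have "mmul n (adj C) (pauli 0 (2^k)) 0 b = cnj (C b 0) * zsign (2^k) b" if "b < 2^n" for b
    unfolding mmul_def
    by (subst sum_eq_single[where a=b]) (auto simp: that pauli_apply adj_def)
  then have "mmul n (mmul n (adj C) (pauli 0 (2^k))) C 0 0
      = (\<Sum>b<2^n. cnj (C b 0) * zsign (2^k) b * C b 0)"
    unfolding mmul_def[of n "mmul n (adj C) (pauli 0 (2^k))" C] by simp
  also have "\<dots> = (\<Sum>b<2^n. complex_of_real ((cmod (C b 0))^2 * (if bit b k then -1 else 1)))"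
    by (intro sum.cong refl) (simp only: zsign_power2_left_real cnj_mult_real_mult_self)
  finally show ?thesis by (simp add: of_real_sum)
qed

lemma pauli_Z_square: "op_eq n (mmul n (pauli 0 z) (pauli 0 z)) ident"
  unfolding op_eq_def by (simp add: mmul_pauli_apply pauli_0_0)

text \<open>The expectation of \<open>Z\<^sub>k\<close> in a stabilizer state is the \<open>|0\<^sup>n\<rangle>\<close> entry of the Pauli
  string \<open>ph X\<^sup>x Z\<^sup>z = C\<^sup>\<dagger> Z\<^sub>k C\<close>, which squares to the identity: it is \<open>0\<close> unless \<open>x = 0\<close>, and
  then \<open>ph\<^sup>2 = 1\<close>.\<close>

lemma clifford_Z_expectation_values:
  assumes C: "clifford n C" and k: "k < n"
  shows "(\<Sum>b<2^n. (cmod (C b 0))^2 * (if bit b k then -1 else 1)) \<in> {-1, 0, 1}"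
proof -
  define M where "M = mmul n (mmul n (adj C) (pauli 0 (2^k))) C"
  obtain ph x z where xz: "x < 2^n" "z < 2^n" and M: "op_eq n M (scaled_pauli ph x z)"
    using clifford_adj_conj_pauli[OF C, of 0 "2^k"] k unfolding M_def by auto
  have CC: "op_eq n (mmul n (adj C) C) ident" "op_eq n (mmul n C (adj C)) ident"
    using clifford_unitary[OF C] by (simp_all add: unitary_op_def)
  have "op_eq n (mmul n (adj C) (mmul n (pauli 0 (2^k)) (mmul n C (mmul n (adj C) (mmul n (pauli 0 (2^k)) C)))))
      (mmul n (adj C) (mmul n (pauli 0 (2^k)) (mmul n (pauli 0 (2^k)) C)))"
    by (rule op_eq_mmul[OF op_eq_refl mmul_cancel_middle[OF CC(2)]])
  also have "op_eq n \<dots> (mmul n (adj C) C)"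
    by (rule op_eq_mmul[OF op_eq_refl mmul_cancel_left[OF pauli_Z_square]])
  also have "op_eq n \<dots> ident" by (rule CC(1))
  finally have "op_eq n (mmul n M M) ident"
    unfolding M_def by (simp only: mmul_assoc)
  then have "mmul n M M 0 0 = 1"
    by (simp add: op_eq_def ident_def)
  moreover have "op_eq n (mmul n M M) (scaled_pauli (ph * ph * zsign z x) 0 0)"
    using op_eq_trans[OF op_eq_mmul[OF M M] mmul_scaled_pauli[OF xz(1)]] by simp
  ultimately have "ph * ph * zsign z x = 1"
    by (simp add: op_eq_def scaled_pauli_apply)
  moreover have "M 0 0 = (if x = 0 then ph else 0)"
    using M by (simp add: op_eq_def scaled_pauli_apply)
  ultimately have "M 0 0 \<in> complex_of_real ` {-1, 0, 1}"
    using square_eq_1_iff[of ph] by (auto simp: power2_eq_square)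
  then show ?thesis
    unfolding M_def Z_expectation_apply by (simp only: inj_image_mem_iff[OF inj_of_real])
qed

section \<open>Stabilizer mixtures are diagonally dominant\<close>

definition single_excitation_supported :: "nat \<Rightarrow> (nat \<Rightarrow> complex) \<Rightarrow> bool" where
  "single_excitation_supported n \<psi> \<longleftrightarrow>
     (\<forall>b<2^n. b \<noteq> 0 \<longrightarrow> (\<forall>l<n. b \<noteq> 2^l) \<longrightarrow> \<psi> b = 0)"

lemma stab_state_excitation_weight:
  assumes C: "clifford n C" and k: "k < n"
    and supp: "single_excitation_supported n (\<lambda>b. C b 0)"
  shows "(cmod (C (2^k) 0))^2 \<in> {0, 1/2, 1}"
proof -
  define a where "a b = (cmod (C b 0))^2" for b
  have "(\<Sum>b<2^n. a b * (if bit b k then -1 else 1)) = (\<Sum>b<2^n. a b) - 2 * (\<Sum>b<2^n. if bit b k then a b else 0)"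
  proof -
    have "a b * (if bit b k then -1 else 1) = a b - 2 * (if bit b k then a b else 0)" for b
      by simp
    then show ?thesis by (simp only: sum_subtractf sum_distrib_left)
  qed
  also have "(\<Sum>b<2^n. if bit b k then a b else 0) = a (2^k)"
  proof (subst sum_eq_single[where a="2^k"])
    show "(if bit b k then a b else 0) = 0" if "b \<noteq> 2^k" "b \<in> {..<2^n}" for b
    proof -
      have "b \<noteq> 0 \<and> (\<forall>l<n. b \<noteq> 2^l)" if "bit b k"
      proof
        show "b \<noteq> 0" using that by (rule contrapos_pn) simp
        show "\<forall>l<n. b \<noteq> 2^l" using that \<open>b \<noteq> 2^k\<close> by auto
      qed
      then show ?thesis using supp that(2) by (auto simp: a_def single_excitation_supported_def)
    qed
  qed (use k in auto)
  finally have "1 - 2 * a (2^k) \<in> {-1, 0, 1}"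
    using clifford_Z_expectation_values[OF C k] unitary_col0_norm[OF clifford_unitary[OF C]]
    by (simp add: a_def)
  then show ?thesis unfolding a_def by auto
qed

lemma sum_offdiag_products_le_square:
  fixes M :: "nat \<Rightarrow> real"
  assumes nonneg: "\<And>l. 0 \<le> M l" and gap: "\<And>l. l < n \<Longrightarrow> (M l)^2 = 0 \<or> (M l)^2 \<ge> 1/2"
    and total: "(\<Sum>l<n. (M l)^2) \<le> 1" and i: "i < n"
  shows "(\<Sum>l\<in>{..<n} - {i}. M i * M l) \<le> (M i)^2"
proof (cases "M i = 0")
  case False
  then have Mi: "(M i)^2 \<ge> 1/2" using gap[OF i] by auto
  have rest: "(\<Sum>l\<in>{..<n} - {i}. (M l)^2) = (\<Sum>l<n. (M l)^2) - (M i)^2"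
    using i by (simp add: sum_diff1)
  have "M i * M l \<le> (M l)^2" if l: "l \<in> {..<n} - {i}" for l
  proof (cases "M l = 0")
    case False
    then have "(M l)^2 \<ge> 1/2" using gap l by auto
    moreover have "(M i)^2 + (M l)^2 \<le> (\<Sum>l<n. (M l)^2)"
      using l i sum_mono2[of "{..<n}" "{i, l}" "\<lambda>l. (M l)^2"] by auto
    ultimately have "(M i)^2 \<le> (M l)^2"
      using total by linarith
    then have "M i \<le> M l"
      using nonneg[of i] nonneg[of l] by (simp add: power_mono_iff)
    then show ?thesis using nonneg by (simp add: power2_eq_square mult_right_mono)
  qed simp
  then have "(\<Sum>l\<in>{..<n} - {i}. M i * M l) \<le> (\<Sum>l\<in>{..<n} - {i}. (M l)^2)"
    by (rule sum_mono)
  also have "\<dots> \<le> (M i)^2" unfolding rest using total Mi by linarith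
  finally show ?thesis .
qed simp

lemma sum_power2_indices_le:
  fixes f :: "nat \<Rightarrow> real"
  assumes "\<And>b. 0 \<le> f b"
  shows "(\<Sum>l<n. f (2^l)) \<le> (\<Sum>b<2^n. f b)"
proof -
  have "inj_on (\<lambda>l::nat. (2::nat)^l) {..<n}" by (auto simp: inj_on_def)
  then have "(\<Sum>l<n. f (2^l)) = (\<Sum>b\<in>(\<lambda>l. 2^l) ` {..<n}. f b)"
    by (simp add: sum.reindex)
  also have "\<dots> \<le> (\<Sum>b<2^n. f b)"
    using assms by (intro sum_mono2) auto
  finally show ?thesis .
qed

lemma stab_state_offdiag_le_diag:
  assumes C: "clifford n C" and supp: "single_excitation_supported n (\<lambda>b. C b 0)" and i: "i < n"
  shows "(\<Sum>l\<in>{..<n} - {i}. cmod (C (2^i) 0) * cmod (C (2^l) 0)) \<le> (cmod (C (2^i) 0))^2"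
proof (rule sum_offdiag_products_le_square[OF _ _ _ i])
  show "(cmod (C (2^l) 0))^2 = 0 \<or> (cmod (C (2^l) 0))^2 \<ge> 1/2" if "l < n" for l
    using stab_state_excitation_weight[OF C that supp] by auto
  have "(\<Sum>l<n. (cmod (C (2^l) 0))^2) \<le> (\<Sum>b<2^n. (cmod (C b 0))^2)"
    by (rule sum_power2_indices_le) simp
  then show "(\<Sum>l<n. (cmod (C (2^l) 0))^2) \<le> 1"
    using unitary_col0_norm[OF clifford_unitary[OF C]] by simp
qed simp

lemma stab_mixture_vanishing_diag:
  fixes m :: nat
  assumes w: "\<forall>j<m. 0 \<le> w j" and b: "b < 2^n" and zero: "\<rho> b b = 0"
    and mix: "op_eq n \<rho> (\<lambda>r c. \<Sum>j<m. complex_of_real (w j) * stab_proj (C j) r c)"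
    and j: "j < m" "0 < w j"
  shows "C j b 0 = 0"
proof -
  have "\<rho> b b = (\<Sum>j<m. complex_of_real (w j) * (C j b 0 * cnj (C j b 0)))"
    using mix b by (simp add: op_eq_def stab_proj_def)
  then have "complex_of_real (\<Sum>j<m. w j * (cmod (C j b 0))^2) = 0"
    using zero by (simp only: of_real_sum of_real_mult complex_norm_square)
  then have "(\<Sum>j<m. w j * (cmod (C j b 0))^2) = 0"
    by (simp only: of_real_eq_0_iff)
  moreover have "\<forall>k\<in>{..<m}. 0 \<le> w k * (cmod (C k b 0))^2"
    using w by simp
  ultimately have "\<forall>k\<in>{..<m}. w k * (cmod (C k b 0))^2 = 0"
    using sum_nonneg_eq_0_iff[of "{..<m}" "\<lambda>k. w k * (cmod (C k b 0))^2"] by simp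
  then have "w j * (cmod (C j b 0))^2 = 0"
    using j(1) by simp
  then show ?thesis using j(2) by simp
qed

lemma rho_of_apply_power2:
  assumes "a < n" "b < n"
  shows "rho_of n p0 B (2^a) (2^b) = complex_of_real (B a b)"
proof -
  have "(\<Sum>i<n. \<Sum>l<n. B i l * ket_e i (2^a) * ket_e l (2^b)) = (\<Sum>i<n. if i = a then B i b else 0)"
    by (intro sum.cong refl) (simp add: ket_e_def assms if_distrib cong: if_cong)
  then show ?thesis
    unfolding rho_of_apply using assms by simp
qed

lemma rho_of_apply_outside:
  assumes "b \<noteq> 0" "\<forall>l<n. b \<noteq> 2^l"
  shows "rho_of n p0 B b b = 0"
  unfolding rho_of_apply using assms by (simp add: ket_e_def)

lemma mixture_row_dominance:
  fixes w :: "nat \<Rightarrow> real" and \<psi> :: "nat \<Rightarrow> 'a \<Rightarrow> complex"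
  assumes w: "\<forall>j<m. 0 \<le> w j"
    and pure: "\<And>j. j < m \<Longrightarrow> 0 < w j \<Longrightarrow>
      (\<Sum>l\<in>L. cmod (\<psi> j i) * cmod (\<psi> j l)) \<le> (cmod (\<psi> j i))^2"
  shows "(\<Sum>l\<in>L. cmod (\<Sum>j<m. complex_of_real (w j) * (\<psi> j i * cnj (\<psi> j l))))
    \<le> (\<Sum>j<m. w j * (cmod (\<psi> j i))^2)"
proof -
  have "(\<Sum>l\<in>L. cmod (\<Sum>j<m. complex_of_real (w j) * (\<psi> j i * cnj (\<psi> j l))))
      \<le> (\<Sum>l\<in>L. \<Sum>j<m. w j * (cmod (\<psi> j i) * cmod (\<psi> j l)))"
    by (intro sum_mono order.trans[OF norm_sum]) (use w in \<open>simp add: norm_mult\<close>)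
  also have "\<dots> = (\<Sum>j<m. w j * (\<Sum>l\<in>L. cmod (\<psi> j i) * cmod (\<psi> j l)))"
    by (subst sum.swap) (simp add: sum_distrib_left)
  also have "\<dots> \<le> (\<Sum>j<m. w j * (cmod (\<psi> j i))^2)"
  proof (rule sum_mono)
    fix j assume "j \<in> {..<m}"
    then show "w j * (\<Sum>l\<in>L. cmod (\<psi> j i) * cmod (\<psi> j l)) \<le> w j * (cmod (\<psi> j i))^2"
      using w pure by (cases "w j = 0") (auto intro: mult_left_mono)
  qed
  finally show ?thesis .
qed

lemma stab_polytope_rho_of_diag_dominant:
  assumes "rho_of n p0 B \<in> stab_polytope n" and i: "i < n"
  shows "(\<Sum>l\<in>{..<n} - {i}. \<bar>B i l\<bar>) \<le> B i i"
proof -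
  obtain m w C where wC: "\<forall>j<(m::nat). 0 \<le> w j \<and> clifford n (C j)"
    and mix: "op_eq n (rho_of n p0 B) (\<lambda>r c. \<Sum>j<m. complex_of_real (w j) * stab_proj (C j) r c)"
    using assms unfolding stab_polytope_def by blast
  define \<psi> where "\<psi> j l = C j (2^l) 0" for j l
  have B: "complex_of_real (B l l') = (\<Sum>j<m. complex_of_real (w j) * (\<psi> j l * cnj (\<psi> j l')))"
    if "l < n" "l' < n" for l l'
    using mix that rho_of_apply_power2[OF that, of p0 B] unfolding op_eq_def stab_proj_def \<psi>_def by simp
  have pure: "(\<Sum>l\<in>{..<n} - {i}. cmod (\<psi> j i) * cmod (\<psi> j l)) \<le> (cmod (\<psi> j i))^2"
    if j: "j < m" "0 < w j" for j
    unfolding \<psi>_def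
  proof (rule stab_state_offdiag_le_diag[OF _ _ i])
    show "clifford n (C j)" using wC j by simp
    show "single_excitation_supported n (\<lambda>b. C j b 0)"
      unfolding single_excitation_supported_def
      using wC j by (auto intro: stab_mixture_vanishing_diag[OF _ _ rho_of_apply_outside mix])
  qed
  have "(\<Sum>l\<in>{..<n} - {i}. \<bar>B i l\<bar>)
      = (\<Sum>l\<in>{..<n} - {i}. cmod (\<Sum>j<m. complex_of_real (w j) * (\<psi> j i * cnj (\<psi> j l))))"
    using B[OF i] by (intro sum.cong refl) (metis Diff_iff lessThan_iff norm_of_real)
  also have "\<dots> \<le> (\<Sum>j<m. w j * (cmod (\<psi> j i))^2)"
    using wC pure by (intro mixture_row_dominance) auto
  also have "\<dots> = B i i"
  proof -
    have "complex_of_real (\<Sum>j<m. w j * (cmod (\<psi> j i))^2) = complex_of_real (B i i)"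
      unfolding B[OF i i] by (simp only: of_real_sum of_real_mult complex_norm_square)
    then show ?thesis by (simp only: of_real_eq_iff)
  qed
  finally show ?thesis .
qed

lemma density_op_diag_nonneg:
  assumes "density_op n \<rho>" "a < 2^n"
  shows "0 \<le> Re (\<rho> a a)"
proof -
  define v where "v r = (if r = a then 1 else 0 :: complex)" for r
  have inner: "(\<Sum>c<2^n. cnj (v r) * \<rho> r c * v c) = cnj (v r) * \<rho> r a" for r
    using assms(2) by (subst sum_eq_single[where a=a]) (auto simp: v_def)
  have quadratic_form: "(\<Sum>r<2^n. \<Sum>c<2^n. cnj (v r) * \<rho> r c * v c) = \<rho> a a"
    unfolding inner using assms(2) by (subst sum_eq_single[where a=a]) (auto simp: v_def)
  have "0 \<le> Re (\<Sum>r<2^n. \<Sum>c<2^n. cnj (v r) * \<rho> r c * v c)"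
    using assms(1) unfolding density_op_def by blast
  then show ?thesis
    unfolding quadratic_form .
qed

theorem lemmaS1:
  fixes n :: nat and p0 :: real and B :: "nat \<Rightarrow> nat \<Rightarrow> real"
  assumes "n \<ge> 2"
    and "\<forall>i<n. \<forall>j<n. B i j = B j i"
    and "\<forall>x :: nat \<Rightarrow> real. 0 \<le> (\<Sum>i<n. \<Sum>j<n. x i * B i j * x j)"
    and "p0 + (\<Sum>i<n. B i i) = 1"
    and "density_op n (rho_of n p0 B)"
  shows "rho_of n p0 B \<in> stab_polytope n \<longleftrightarrow>
         (\<forall>i<n. B i i \<ge> (\<Sum>j\<in>{..<n} - {i}. \<bar>B i j\<bar>))"
proof
  assume "rho_of n p0 B \<in> stab_polytope n"
  then show "\<forall>i<n. B i i \<ge> (\<Sum>j\<in>{..<n} - {i}. \<bar>B i j\<bar>)"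
    using stab_polytope_rho_of_diag_dominant by blast
next
  assume dominant: "\<forall>i<n. B i i \<ge> (\<Sum>j\<in>{..<n} - {i}. \<bar>B i j\<bar>)"
  \<comment> \<open>Positivity of \<open>\<rho>\<close> is needed only here, for \<open>p0 \<ge> 0\<close>.\<close>
  have "0 \<le> Re (rho_of n p0 B 0 0)"
    using density_op_diag_nonneg[OF assms(5)] by simp
  then have "0 \<le> p0"
    by (simp add: rho_of_apply ket_e_def)
  then show "rho_of n p0 B \<in> stab_polytope n"
    unfolding stab_polytope_iff_stab_cone by (rule rho_of_in_stab_cone[OF assms(2) _ assms(4) dominant])
qed

end
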